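(* Let $V$ be a unitary irreducible lowest weight representation of $\hat{G}_{\Lambda,\Lambda_F}$ with lowest weight $h$. If $\dot I,\dot J$ are sequences and $\lambda_1,\lambda_2,\lambda_3,\lambda_4\in\{1,\dots,\Lambda_F\}$ satisfy $\dot I\lambda_1\lambda_3>\dot J\lambda_2\lambda_4$, then $h_I(\lambda_2;\dot J;\lambda_4)-h_I(\lambda_1;\dot I;\lambda_3)$ is a non-negative integer.
   Context: Fix positive integers $\Lambda,\Lambda_F$. A sequence $\dot I=i_1\cdots i_a$ is a finite, possibly empty, sequence of integers in $\{1,\dots,\Lambda\}$; $\#(\dot I)=a$, juxtaposition denotes concatenation, and $\delta^{\dot I}_{\dot J}$ is $1$ if $\dot I=\dot J$ and $0$ otherwise (similarly for integers). Let $\mathcal{T}_o$ be the complex vector space with basis the symbols $\bar\phi^{\lambda_1}\otimes s^{\dot K}\otimes\phi^{\lambda_2}$, $1\le\lambda_1,\lambda_2\le\Lambda_F$, $\dot K$ any sequence. For all sequences $\dot I,\dot J$ and all $\lambda_i\in\{1,\dots,\Lambda_F\}$ define linear operators on $\mathcal{T}_o$: first kind: $\bar\Xi^{\lambda_1}_{\lambda_2}\otimes f^{\dot I}_{\dot J}\otimes\Xi^{\lambda_3}_{\lambda_4}(\bar\phi^{\lambda_5}\otimes s^{\dot K}\otimes\phi^{\lambda_6})=\delta^{\lambda_5}_{\lambda_2}\delta^{\dot K}_{\dot J}\delta^{\lambda_6}_{\lambda_4}\,\bar\phi^{\lambda_1}\otimes s^{\dot I}\otimes\phi^{\lambda_3}$;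 second kind: $\bar\Xi^{\lambda_1}_{\lambda_2}\otimes l^{\dot I}_{\dot J}(\bar\phi^{\lambda_3}\otimes s^{\dot K}\otimes\phi^{\lambda_4})=\delta^{\lambda_3}_{\lambda_2}\sum_{\dot K_1\dot K_2=\dot K}\delta^{\dot K_1}_{\dot J}\,\bar\phi^{\lambda_1}\otimes s^{\dot I\dot K_2}\otimes\phi^{\lambda_4}$; third kind: $r^{\dot I}_{\dot J}\otimes\Xi^{\lambda_1}_{\lambda_2}(\bar\phi^{\lambda_3}\otimes s^{\dot K}\otimes\phi^{\lambda_4})=\delta^{\lambda_4}_{\lambda_2}\sum_{\dot K_1\dot K_2=\dot K}\delta^{\dot K_2}_{\dot J}\,\bar\phi^{\lambda_3}\otimes s^{\dot K_1\dot I}\otimes\phi^{\lambda_1}$; fourth kind: $\sigma^{\dot I}_{\dot J}(\bar\phi^{\lambda_1}\otimes s^{\dot K}\otimes\phi^{\lambda_2})=\sum_{\dot K_1\dot K_2\dot K_3=\dot K}\delta^{\dot K_2}_{\dot J}\,\bar\phi^{\lambda_1}\otimes s^{\dot K_1\dot I\dot K_3}\otimes\phi^{\lambda_2}$; sums over all ways to write $\dot K$ as a concatenation of possibly empty sequences. The open string algebra $\hat{G}_{\Lambda,\Lambda_F}$ is the Lie algebra (commutator bracket) of operators on $\mathcal{T}_o$ spanned by these operators. Ordering: for finite sequences of positive integers $a=a_1\cdots a_m$, $b=b_1\cdots b_n$, $a>b$ means $m>n$, or $m=n\ne0$ and $a_r>b_r$ at the first index $r$ where they differ (applied to concatenations like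 $\dot I\lambda_1\lambda_3$). $G^{00}$ is the span of all $\bar\Xi^{\lambda_1}_{\lambda_1}\otimes f^{\dot I}_{\dot I}\otimes\Xi^{\lambda_2}_{\lambda_2}$, $\bar\Xi^{\lambda}_{\lambda}\otimes l^{\dot I}_{\dot I}$, $r^{\dot I}_{\dot I}\otimes\Xi^{\lambda}_{\lambda}$, $\sigma^{\dot I}_{\dot I}$. $G^-$ is the span of all operators of the four kinds with $\#(\dot I)<\#(\dot J)$, together with those with $\#(\dot I)=\#(\dot J)$ and $\dot J\lambda_2\lambda_4>\dot I\lambda_1\lambda_3$ (first kind), $\dot J\lambda_2>\dot I\lambda_1$ (second and third kind), $\dot J>\dot I$ (fourth kind). $\omega$ is the antilinear anti-involution swapping upper and lower indices: $\omega(\bar\Xi^{\lambda_1}_{\lambda_2}\otimes f^{\dot I}_{\dot J}\otimes\Xi^{\lambda_3}_{\lambda_4})=\bar\Xi^{\lambda_2}_{\lambda_1}\otimes f^{\dot J}_{\dot I}\otimes\Xi^{\lambda_4}_{\lambda_3}$, $\omega(\bar\Xi^{\lambda_1}_{\lambda_2}\otimes l^{\dot I}_{\dot J})=\bar\Xi^{\lambda_2}_{\lambda_1}\otimes l^{\dot J}_{\dot I}$, $\omega(r^{\dot I}_{\dot J}\otimes\Xi^{\lambda_1}_{\lambda_2})=r^{\dot J}_{\dot I}\otimes\Xi^{\lambda_2}_{\lambda_1}$, $\omega(\sigma^{\dot I}_{\dot J})=\sigma^{\dot J}_{\dot I}$. A lowest weight $h$ is a linear functional on $G^{00}$ real on the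 spanning operators; $h_I(\lambda_1;\dot I;\lambda_2)$ denotes its value on $\bar\Xi^{\lambda_1}_{\lambda_1}\otimes f^{\dot I}_{\dot I}\otimes\Xi^{\lambda_2}_{\lambda_2}$. A unitary lowest weight representation with lowest weight $h$ is a representation $V$ generated by a vector $v\ne0$ with $G^-v=0$ and $Hv=h(H)v$ for $H\in G^{00}$, carrying a positive definite Hermitian form with $\langle Xu,w\rangle=\langle u,\omega(X)w\rangle$ for all $X$. *)

theory Defs
  imports Complex_Main
begin

text \<open>Basis symbols of T_o: (lambda1, K, lambda2) stands for
  phibar^lambda1 (x) s^K (x) phi^lambda2.  Sequences are lists of naturals.\<close>

type_synonym bidx = "nat \<times> nat list \<times> nat"

text \<open>Operators on T_o are represented by their (column- and row-finite) matrices
  w.r.t. the basis: M out in is the coefficient of basis vector out in M(in).\<close>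

type_synonym opmat = "bidx \<Rightarrow> bidx \<Rightarrow> complex"

definition valid_seq :: "nat \<Rightarrow> nat list \<Rightarrow> bool" where
  "valid_seq L K \<longleftrightarrow> set K \<subseteq> {1..L}"

definition valid_idx :: "nat \<Rightarrow> nat \<Rightarrow> bidx \<Rightarrow> bool" where
  "valid_idx L LF x \<longleftrightarrow> (case x of (a, K, b) \<Rightarrow> a \<in> {1..LF} \<and> b \<in> {1..LF} \<and> valid_seq L K)"

text \<open>First kind: Xibar^l1_l2 (x) f^I_J (x) Xi^l3_l4.\<close>
definition opF :: "nat \<Rightarrow> nat \<Rightarrow> nat \<Rightarrow> nat \<Rightarrow> nat list \<Rightarrow> nat list \<Rightarrow> nat \<Rightarrow> nat \<Rightarrow> opmat" where
  "opF L LF l1 l2 I J l3 l4 = (\<lambda>(a, M, b) (c, K, d).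
     if valid_idx L LF (a, M, b) \<and> valid_idx L LF (c, K, d)
        \<and> c = l2 \<and> K = J \<and> d = l4 \<and> a = l1 \<and> M = I \<and> b = l3 then 1 else 0)"

text \<open>Second kind: Xibar^l1_l2 (x) l^I_J.\<close>
definition opL :: "nat \<Rightarrow> nat \<Rightarrow> nat \<Rightarrow> nat \<Rightarrow> nat list \<Rightarrow> nat list \<Rightarrow> opmat" where
  "opL L LF l1 l2 I J = (\<lambda>(a, M, b) (c, K, d).
     if valid_idx L LF (a, M, b) \<and> valid_idx L LF (c, K, d)
        \<and> c = l2 \<and> a = l1 \<and> b = d
     then of_nat (card {(K1, K2). K = K1 @ K2 \<and> K1 = J \<and> M = I @ K2}) else 0)"

text \<open>Third kind: r^I_J (x) Xi^l1_l2.\<close>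
definition opR :: "nat \<Rightarrow> nat \<Rightarrow> nat list \<Rightarrow> nat list \<Rightarrow> nat \<Rightarrow> nat \<Rightarrow> opmat" where
  "opR L LF I J l1 l2 = (\<lambda>(a, M, b) (c, K, d).
     if valid_idx L LF (a, M, b) \<and> valid_idx L LF (c, K, d)
        \<and> d = l2 \<and> b = l1 \<and> a = c
     then of_nat (card {(K1, K2). K = K1 @ K2 \<and> K2 = J \<and> M = K1 @ I}) else 0)"

text \<open>Fourth kind: sigma^I_J.\<close>
definition opS :: "nat \<Rightarrow> nat \<Rightarrow> nat list \<Rightarrow> nat list \<Rightarrow> opmat" where
  "opS L LF I J = (\<lambda>(a, M, b) (c, K, d).
     if valid_idx L LF (a, M, b) \<and> valid_idx L LF (c, K, d) \<and> a = c \<and> b = d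
     then of_nat (card {(K1, K2, K3). K = K1 @ K2 @ K3 \<and> K2 = J \<and> M = K1 @ I @ K3}) else 0)"

definition mmul :: "opmat \<Rightarrow> opmat \<Rightarrow> opmat" where
  "mmul A B = (\<lambda>x z. \<Sum>y\<in>{y. B y z \<noteq> 0}. A x y * B y z)"

definition brk :: "opmat \<Rightarrow> opmat \<Rightarrow> opmat" where
  "brk A B = (\<lambda>x z. mmul A B x z - mmul B A x z)"

definition cspan :: "opmat set \<Rightarrow> opmat set" where
  "cspan S = {M. \<exists>F c. finite F \<and> F \<subseteq> S \<and> M = (\<lambda>x y. \<Sum>g\<in>F. c g * g x y)}"

definition gens :: "nat \<Rightarrow> nat \<Rightarrow> opmat set" where
  "gens L LF =
     {opF L LF l1 l2 I J l3 l4 | l1 l2 I J l3 l4.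
        l1 \<in> {1..LF} \<and> l2 \<in> {1..LF} \<and> l3 \<in> {1..LF} \<and> l4 \<in> {1..LF} \<and> valid_seq L I \<and> valid_seq L J}
   \<union> {opL L LF l1 l2 I J | l1 l2 I J. l1 \<in> {1..LF} \<and> l2 \<in> {1..LF} \<and> valid_seq L I \<and> valid_seq L J}
   \<union> {opR L LF I J l1 l2 | l1 l2 I J. l1 \<in> {1..LF} \<and> l2 \<in> {1..LF} \<and> valid_seq L I \<and> valid_seq L J}
   \<union> {opS L LF I J | I J. valid_seq L I \<and> valid_seq L J}"

definition Ghat :: "nat \<Rightarrow> nat \<Rightarrow> opmat set" where
  "Ghat L LF = cspan (gens L LF)"

definition seq_gt :: "nat list \<Rightarrow> nat list \<Rightarrow> bool" where
  "seq_gt a b \<longleftrightarrow> length a > length b \<or>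
     (length a = length b \<and> a \<noteq> [] \<and> (\<exists>r < length a. take r a = take r b \<and> a ! r > b ! r))"

definition G00_gens :: "nat \<Rightarrow> nat \<Rightarrow> opmat set" where
  "G00_gens L LF =
     {opF L LF l1 l1 I I l2 l2 | l1 l2 I. l1 \<in> {1..LF} \<and> l2 \<in> {1..LF} \<and> valid_seq L I}
   \<union> {opL L LF l l I I | l I. l \<in> {1..LF} \<and> valid_seq L I}
   \<union> {opR L LF I I l l | l I. l \<in> {1..LF} \<and> valid_seq L I}
   \<union> {opS L LF I I | I. valid_seq L I}"

definition G00 :: "nat \<Rightarrow> nat \<Rightarrow> opmat set" where
  "G00 L LF = cspan (G00_gens L LF)"

definition Gminus :: "nat \<Rightarrow> nat \<Rightarrow> opmat set" where
  "Gminus L LF = cspan (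
     {opF L LF l1 l2 I J l3 l4 | l1 l2 I J l3 l4.
        l1 \<in> {1..LF} \<and> l2 \<in> {1..LF} \<and> l3 \<in> {1..LF} \<and> l4 \<in> {1..LF} \<and> valid_seq L I \<and> valid_seq L J
        \<and> (length I < length J \<or> (length I = length J \<and> seq_gt (J @ [l2, l4]) (I @ [l1, l3])))}
   \<union> {opL L LF l1 l2 I J | l1 l2 I J. l1 \<in> {1..LF} \<and> l2 \<in> {1..LF} \<and> valid_seq L I \<and> valid_seq L J
        \<and> (length I < length J \<or> (length I = length J \<and> seq_gt (J @ [l2]) (I @ [l1])))}
   \<union> {opR L LF I J l1 l2 | l1 l2 I J. l1 \<in> {1..LF} \<and> l2 \<in> {1..LF} \<and> valid_seq L I \<and> valid_seq L J
        \<and> (length I < length J \<or> (length I = length J \<and> seq_gt (J @ [l2]) (I @ [l1])))}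
   \<union> {opS L LF I J | I J. valid_seq L I \<and> valid_seq L J
        \<and> (length I < length J \<or> (length I = length J \<and> seq_gt J I))})"

text \<open>The anti-involution omega: on the generators it swaps upper and lower indices,
  which is exactly the conjugate transpose of the matrix; it is antilinear.\<close>
definition omega :: "opmat \<Rightarrow> opmat" where
  "omega M = (\<lambda>x y. cnj (M y x))"

definition lowest_weight :: "nat \<Rightarrow> nat \<Rightarrow> (opmat \<Rightarrow> complex) \<Rightarrow> bool" where
  "lowest_weight L LF h \<longleftrightarrow>
     (\<forall>X\<in>G00 L LF. \<forall>Y\<in>G00 L LF. \<forall>a b. h (\<lambda>x y. a * X x y + b * Y x y) = a * h X + b * h Y)
     \<and> (\<forall>H\<in>G00_gens L LF. h H \<in> \<real>)"

definition hI :: "nat \<Rightarrow> nat \<Rightarrow> (opmat \<Rightarrow> complex) \<Rightarrow> nat \<Rightarrow> nat list \<Rightarrow> nat \<Rightarrow> complex" where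
  "hI L LF h l1 I l2 = h (opF L LF l1 l1 I I l2 l2)"

definition is_rep :: "nat \<Rightarrow> nat \<Rightarrow> (complex \<Rightarrow> 'v::ab_group_add \<Rightarrow> 'v) \<Rightarrow> (opmat \<Rightarrow> 'v \<Rightarrow> 'v) \<Rightarrow> bool" where
  "is_rep L LF sc rho \<longleftrightarrow> vector_space sc
     \<and> (\<forall>X\<in>Ghat L LF. Vector_Spaces.linear sc sc (rho X))
     \<and> (\<forall>X\<in>Ghat L LF. \<forall>Y\<in>Ghat L LF. \<forall>a b u.
          rho (\<lambda>x y. a * X x y + b * Y x y) u = sc a (rho X u) + sc b (rho Y u))
     \<and> (\<forall>X\<in>Ghat L LF. \<forall>Y\<in>Ghat L LF. \<forall>u.
          rho (brk X Y) u = rho X (rho Y u) - rho Y (rho X u))"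

definition invariant_subspace :: "nat \<Rightarrow> nat \<Rightarrow> (complex \<Rightarrow> 'v::ab_group_add \<Rightarrow> 'v) \<Rightarrow> (opmat \<Rightarrow> 'v \<Rightarrow> 'v) \<Rightarrow> 'v set \<Rightarrow> bool" where
  "invariant_subspace L LF sc rho W \<longleftrightarrow> module.subspace sc W \<and> (\<forall>X\<in>Ghat L LF. \<forall>w\<in>W. rho X w \<in> W)"

definition irreducible_rep :: "nat \<Rightarrow> nat \<Rightarrow> (complex \<Rightarrow> 'v::ab_group_add \<Rightarrow> 'v) \<Rightarrow> (opmat \<Rightarrow> 'v \<Rightarrow> 'v) \<Rightarrow> bool" where
  "irreducible_rep L LF sc rho \<longleftrightarrow> (\<exists>u::'v. u \<noteq> 0) \<and>
     (\<forall>W. invariant_subspace L LF sc rho W \<longrightarrow> W = {0} \<or> W = UNIV)"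

definition lw_rep :: "nat \<Rightarrow> nat \<Rightarrow> (complex \<Rightarrow> 'v::ab_group_add \<Rightarrow> 'v) \<Rightarrow> (opmat \<Rightarrow> 'v \<Rightarrow> 'v) \<Rightarrow> 'v \<Rightarrow> (opmat \<Rightarrow> complex) \<Rightarrow> bool" where
  "lw_rep L LF sc rho v h \<longleftrightarrow> is_rep L LF sc rho \<and> lowest_weight L LF h \<and> v \<noteq> 0
     \<and> (\<forall>W. invariant_subspace L LF sc rho W \<and> v \<in> W \<longrightarrow> W = UNIV)
     \<and> (\<forall>X\<in>Gminus L LF. rho X v = 0)
     \<and> (\<forall>H\<in>G00 L LF. rho H v = sc (h H) v)"

definition unitary_form :: "nat \<Rightarrow> nat \<Rightarrow> (complex \<Rightarrow> 'v::ab_group_add \<Rightarrow> 'v) \<Rightarrow> (opmat \<Rightarrow> 'v \<Rightarrow> 'v) \<Rightarrow> ('v \<Rightarrow> 'v \<Rightarrow> complex) \<Rightarrow> bool" where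
  "unitary_form L LF sc rho ip \<longleftrightarrow>
     (\<forall>u u' w. ip (u + u') w = ip u w + ip u' w)
     \<and> (\<forall>c u w. ip (sc c u) w = c * ip u w)
     \<and> (\<forall>u w. ip u w = cnj (ip w u))
     \<and> (\<forall>u. u \<noteq> 0 \<longrightarrow> ip u u \<in> \<real> \<and> Re (ip u u) > 0)
     \<and> (\<forall>X\<in>Ghat L LF. \<forall>u w. ip (rho X u) w = ip u (rho (omega X) w))"

end

(* The first-kind operators are matrix units: with a = (l1, I, l3) and b = (l2, J, l4),
   E = e_ab, F = e_ba = omega(E) and H = e_aa - e_bb satisfy [E, F] = H and [H, E] = 2E.
   Since F lies in G^- it kills v, so v is a lowest weight vector of this sl2 of weight
   mu = h(e_aa) - h(e_bb), and F E^(k+1) v = -(k+1)(mu+k) E^k v.  Contravariance gives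
   |E^(k+1) v|^2 = -(k+1)(cnj mu + k) |E^k v|^2, so if -mu were not a natural number the string E^k v
   would never vanish and positivity would force Re mu < -k for every k. *)

theory Submission
  imports Defs
begin

locale sl2_lowest_weight_vector =
  e: Vector_Spaces.linear scale scale e + f: Vector_Spaces.linear scale scale f
  for scale :: "complex \<Rightarrow> 'v::ab_group_add \<Rightarrow> 'v" (infixr \<open>*s\<close> 75)
    and e f :: "'v \<Rightarrow> 'v" +
  fixes hc :: "'v \<Rightarrow> 'v" and v :: 'v and \<mu> :: complex
  assumes commutator_ef: "e (f u) - f (e u) = hc u"
    and commutator_hc_e: "hc (e u) - e (hc u) = 2 *s e u"
    and f_v: "f v = 0"
    and hc_v: "hc v = \<mu> *s v"
    and v_nonzero: "v \<noteq> 0"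
begin

lemma hc_e_power: "hc ((e ^^ k) v) = (\<mu> + 2 * of_nat k) *s (e ^^ k) v"
proof (induction k)
  case 0
  show ?case by (simp add: hc_v)
next
  case (Suc k)
  have "hc ((e ^^ Suc k) v) = e (hc ((e ^^ k) v)) + 2 *s (e ^^ Suc k) v"
    using commutator_hc_e[of "(e ^^ k) v"] by (simp add: algebra_simps)
  also have "\<dots> = ((\<mu> + 2 * of_nat k) + 2) *s (e ^^ Suc k) v"
    by (simp only: Suc) (simp only: e.add e.scale funpow.simps o_apply e.vs1.scale_left_distrib)
  also have "(\<mu> + 2 * of_nat k) + 2 = \<mu> + 2 * of_nat (Suc k)"
    by simp
  finally show ?case .
qed

lemma f_e_power_Suc:
  "f ((e ^^ Suc k) v) = (- (of_nat (Suc k) * (\<mu> + of_nat k))) *s (e ^^ k) v"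
proof (induction k)
  case 0
  have "f (e v) = - hc v"
    using commutator_ef[of v] by (simp add: f_v) (metis minus_minus)
  then show ?case by (simp add: hc_v)
next
  case (Suc k)
  have "f ((e ^^ Suc (Suc k)) v) = e (f ((e ^^ Suc k) v)) - hc ((e ^^ Suc k) v)"
    using commutator_ef[of "(e ^^ Suc k) v"] by (simp add: algebra_simps)
  also have "\<dots> = (- (of_nat (Suc k) * (\<mu> + of_nat k)) - (\<mu> + 2 * of_nat (Suc k))) *s (e ^^ Suc k) v"
    by (simp only: Suc hc_e_power)
      (simp only: e.scale funpow.simps o_apply e.vs1.scale_left_diff_distrib)
  also have "- (of_nat (Suc k) * (\<mu> + of_nat k)) - (\<mu> + 2 * of_nat (Suc k))
      = - (of_nat (Suc (Suc k)) * (\<mu> + of_nat (Suc k)))"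
    by (simp add: algebra_simps)
  finally show ?case .
qed

lemma e_power_nonzero:
  assumes "\<And>j. j < k \<Longrightarrow> \<mu> \<noteq> - of_nat j"
  shows "(e ^^ k) v \<noteq> 0"
  using assms
proof (induction k)
  case 0
  show ?case using v_nonzero by simp
next
  case (Suc k)
  have "of_nat (Suc k) * (\<mu> + of_nat k) \<noteq> 0"
    using Suc.prems[of k] by (auto simp: eq_neg_iff_add_eq_0 simp del: of_nat_Suc)
  moreover have "(e ^^ k) v \<noteq> 0"
    using Suc by simp
  ultimately have "f ((e ^^ Suc k) v) \<noteq> 0"
    by (simp only: f_e_power_Suc e.vs1.scale_eq_0_iff neg_equal_0_iff_equal) simp
  then show ?case by auto
qed

end

locale unitary_sl2_lowest_weight_vector = sl2_lowest_weight_vector +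
  fixes ip
  assumes ip_scale_left: "ip (scale c u) w = c * ip u w"
    and ip_commute: "ip u w = cnj (ip w u)"
    and ip_self_real: "u \<noteq> 0 \<Longrightarrow> ip u u \<in> \<real>"
    and ip_self_pos: "u \<noteq> 0 \<Longrightarrow> 0 < Re (ip u u)"
    and e_adjoint: "ip (e u) w = ip u (f w)"
begin

lemma ip_scale_right: "ip u (c *s w) = cnj c * ip u w"
proof -
  have "ip u (c *s w) = cnj (c * ip w u)"
    by (subst ip_commute) (simp add: ip_scale_left)
  also have "\<dots> = cnj c * ip u w"
    by (simp add: ip_commute[of u w])
  finally show ?thesis .
qed

lemma ip_e_power_Suc:
  "ip ((e ^^ Suc k) v) ((e ^^ Suc k) v)
     = - (of_nat (Suc k) * (cnj \<mu> + of_nat k)) * ip ((e ^^ k) v) ((e ^^ k) v)"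
proof -
  have "ip ((e ^^ Suc k) v) ((e ^^ Suc k) v) = ip ((e ^^ k) v) (f ((e ^^ Suc k) v))"
    using e_adjoint by simp
  then show ?thesis
    by (simp only: f_e_power_Suc ip_scale_right) simp
qed

lemma e_power_Suc_nonzero_imp_weight_bound:
  assumes "(e ^^ Suc k) v \<noteq> 0"
  shows "Re \<mu> < - of_nat k"
proof -
  define N where "N j = Re (ip ((e ^^ j) v) ((e ^^ j) v))" for j
  have "(e ^^ k) v \<noteq> 0"
    using assms by auto
  then have "ip ((e ^^ k) v) ((e ^^ k) v) = of_real (N k)" and "0 < N k"
    using ip_self_real ip_self_pos unfolding N_def by (auto elim: Reals_cases)
  then have "N (Suc k) = (- (real (Suc k) * (Re \<mu> + real k))) * N k"
    unfolding N_def[of "Suc k"] ip_e_power_Suc by simp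
  moreover have "0 < N (Suc k)"
    using assms ip_self_pos unfolding N_def by blast
  ultimately have "0 < - (real (Suc k) * (Re \<mu> + real k))"
    using \<open>0 < N k\<close> by (metis zero_less_mult_pos2)
  then show ?thesis
    by (auto simp: mult_less_0_iff)
qed

theorem lowest_weight_nonpos_int: "\<exists>n. \<mu> = - of_nat n"
proof (rule ccontr)
  assume "\<nexists>n. \<mu> = - of_nat n"
  then have "Re \<mu> < - of_nat k" for k
    using e_power_Suc_nonzero_imp_weight_bound e_power_nonzero by blast
  from this[of "nat \<lceil>- Re \<mu>\<rceil>"] show False
    by linarith
qed

end

definition matrix_unit :: "bidx \<Rightarrow> bidx \<Rightarrow> opmat" where
  "matrix_unit p q = (\<lambda>x y. if x = p \<and> y = q then 1 else 0)"

lemma mmul_matrix_unit: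
  "mmul (matrix_unit a b) (matrix_unit c d) = (if b = c then matrix_unit a d else (\<lambda>_ _. 0))"
proof (intro ext)
  fix x z
  have "{y. matrix_unit c d y z \<noteq> 0} = (if z = d then {c} else {})"
    by (auto simp: matrix_unit_def)
  then show "mmul (matrix_unit a b) (matrix_unit c d) x z
      = (if b = c then matrix_unit a d else (\<lambda>_ _. 0)) x z"
    by (auto simp: mmul_def matrix_unit_def)
qed

lemma brk_matrix_unit:
  "brk (matrix_unit a b) (matrix_unit c d)
     = (\<lambda>x y. (if b = c then matrix_unit a d x y else 0) - (if d = a then matrix_unit c b x y else 0))"
  by (simp add: brk_def mmul_matrix_unit)

lemma omega_matrix_unit: "omega (matrix_unit a b) = matrix_unit b a"
  by (auto simp: omega_def matrix_unit_def fun_eq_iff)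

lemma opF_eq_matrix_unit:
  assumes "valid_idx L LF (l1, I, l3)" and "valid_idx L LF (l2, J, l4)"
  shows "opF L LF l1 l2 I J l3 l4 = matrix_unit (l1, I, l3) (l2, J, l4)"
  using assms by (auto simp: opF_def matrix_unit_def fun_eq_iff)

lemma cspan_base: "g \<in> S \<Longrightarrow> g \<in> cspan S"
  unfolding cspan_def by (rule CollectI, rule exI[of _ "{g}"], rule exI[of _ "\<lambda>_. 1"]) auto

lemma matrix_unit_in_gens:
  assumes "valid_idx L LF a" and "valid_idx L LF b"
  shows "matrix_unit a b \<in> gens L LF"
proof -
  obtain l1 I l3 l2 J l4 where ab: "a = (l1, I, l3)" "b = (l2, J, l4)"
    by (cases a, cases b)
  have "opF L LF l1 l2 I J l3 l4 \<in> gens L LF"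
    using assms unfolding gens_def ab valid_idx_def by (intro UnI1) blast
  with assms show ?thesis
    by (simp add: ab opF_eq_matrix_unit)
qed

lemma matrix_unit_in_Ghat:
  "valid_idx L LF a \<Longrightarrow> valid_idx L LF b \<Longrightarrow> matrix_unit a b \<in> Ghat L LF"
  unfolding Ghat_def by (intro cspan_base matrix_unit_in_gens)

lemma matrix_unit_diag_in_G00_gens:
  assumes "valid_idx L LF a"
  shows "matrix_unit a a \<in> G00_gens L LF"
proof -
  obtain l1 I l3 where a: "a = (l1, I, l3)"
    by (cases a)
  have "opF L LF l1 l1 I I l3 l3 \<in> G00_gens L LF"
    using assms unfolding G00_gens_def a valid_idx_def by (intro UnI1) blast
  with assms show ?thesis
    by (simp add: a opF_eq_matrix_unit)
qed

definition idx_word :: "bidx \<Rightarrow> nat list" where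
  "idx_word = (\<lambda>(l1, K, l2). K @ [l1, l2])"

lemma seq_gt_irrefl: "\<not> seq_gt x x"
  by (auto simp: seq_gt_def)

lemma seq_gt_length: "seq_gt x y \<Longrightarrow> length y \<le> length x"
  by (auto simp: seq_gt_def)

lemma matrix_unit_in_Gminus:
  assumes "valid_idx L LF a" and "valid_idx L LF b" and "seq_gt (idx_word b) (idx_word a)"
  shows "matrix_unit a b \<in> Gminus L LF"
proof -
  obtain l1 I l3 l2 J l4 where ab: "a = (l1, I, l3)" "b = (l2, J, l4)"
    by (cases a, cases b)
  with assms(3) have "length I < length J \<or> (length I = length J \<and> seq_gt (J @ [l2, l4]) (I @ [l1, l3]))"
    using seq_gt_length by (fastforce simp: idx_word_def)
  with assms(1,2) have "opF L LF l1 l2 I J l3 l4 \<in> Gminus L LF"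
    unfolding Gminus_def ab valid_idx_def by (intro cspan_base UnI1) blast
  with assms(1,2) show ?thesis
    by (simp add: ab opF_eq_matrix_unit)
qed

lemma rep_commutator:
  assumes "is_rep L LF sc rho"
    and "X \<in> Ghat L LF" "Y \<in> Ghat L LF" "Z \<in> Ghat L LF" "Z' \<in> Ghat L LF"
    and "brk X Y = (\<lambda>x y. c * Z x y + d * Z' x y)"
  shows "rho X (rho Y u) - rho Y (rho X u) = sc c (rho Z u) + sc d (rho Z' u)"
proof -
  have "rho (brk X Y) u = rho X (rho Y u) - rho Y (rho X u)"
    using assms(1-3) by (simp add: is_rep_def)
  moreover have "rho (\<lambda>x y. c * Z x y + d * Z' x y) u = sc c (rho Z u) + sc d (rho Z' u)"
    using assms(1,4,5) by (simp add: is_rep_def)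
  ultimately show ?thesis
    using assms(6) by simp
qed

lemma rep_matrix_unit_commutators:
  assumes rep: "is_rep L LF sc rho"
    and a: "valid_idx L LF a" and b: "valid_idx L LF b" and "a \<noteq> b"
  shows "rho (matrix_unit a b) (rho (matrix_unit b a) u) - rho (matrix_unit b a) (rho (matrix_unit a b) u)
           = rho (matrix_unit a a) u - rho (matrix_unit b b) u"
    and "rho (matrix_unit a a) (rho (matrix_unit a b) u) - rho (matrix_unit a b) (rho (matrix_unit a a) u)
           = rho (matrix_unit a b) u"
    and "rho (matrix_unit b b) (rho (matrix_unit a b) u) - rho (matrix_unit a b) (rho (matrix_unit b b) u)
           = - rho (matrix_unit a b) u"
proof -
  interpret vector_space sc
    using rep by (simp add: is_rep_def)
  have Ghat: "matrix_unit a b \<in> Ghat L LF" "matrix_unit b a \<in> Ghat L LF"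
    "matrix_unit a a \<in> Ghat L LF" "matrix_unit b b \<in> Ghat L LF"
    using a b by (simp_all add: matrix_unit_in_Ghat)
  have "brk (matrix_unit a b) (matrix_unit b a)
      = (\<lambda>x y. 1 * matrix_unit a a x y + (- 1) * matrix_unit b b x y)"
    using \<open>a \<noteq> b\<close> unfolding brk_matrix_unit by (auto simp: matrix_unit_def fun_eq_iff)
  from rep_commutator[OF rep Ghat(1,2,3,4) this]
  show "rho (matrix_unit a b) (rho (matrix_unit b a) u) - rho (matrix_unit b a) (rho (matrix_unit a b) u)
      = rho (matrix_unit a a) u - rho (matrix_unit b b) u"
    by simp
  have "brk (matrix_unit a a) (matrix_unit a b)
      = (\<lambda>x y. 1 * matrix_unit a b x y + 0 * matrix_unit a b x y)"
    using \<open>a \<noteq> b\<close> unfolding brk_matrix_unit by (auto simp: matrix_unit_def fun_eq_iff)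
  from rep_commutator[OF rep Ghat(3,1,1,1) this]
  show "rho (matrix_unit a a) (rho (matrix_unit a b) u) - rho (matrix_unit a b) (rho (matrix_unit a a) u)
      = rho (matrix_unit a b) u"
    by simp
  have "brk (matrix_unit b b) (matrix_unit a b)
      = (\<lambda>x y. (- 1) * matrix_unit a b x y + 0 * matrix_unit a b x y)"
    using \<open>a \<noteq> b\<close> unfolding brk_matrix_unit by (auto simp: matrix_unit_def fun_eq_iff)
  from rep_commutator[OF rep Ghat(4,1,1,1) this]
  show "rho (matrix_unit b b) (rho (matrix_unit a b) u) - rho (matrix_unit a b) (rho (matrix_unit b b) u)
      = - rho (matrix_unit a b) u"
    by simp
qed

lemma lw_rep_sl2_lowest_weight_vector:
  assumes lw: "lw_rep L LF sc rho v h"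
    and a: "valid_idx L LF a" and b: "valid_idx L LF b"
    and gt: "seq_gt (idx_word a) (idx_word b)"
  shows "sl2_lowest_weight_vector sc (rho (matrix_unit a b)) (rho (matrix_unit b a))
           (\<lambda>u. rho (matrix_unit a a) u - rho (matrix_unit b b) u) v
           (h (matrix_unit a a) - h (matrix_unit b b))"
proof -
  define E F P Q where "E = matrix_unit a b" and "F = matrix_unit b a"
    and "P = matrix_unit a a" and "Q = matrix_unit b b"
  have rep: "is_rep L LF sc rho"
    using lw by (simp add: lw_rep_def)
  then interpret vector_space sc
    by (simp add: is_rep_def)
  have linear: "Vector_Spaces.linear sc sc (rho E)" "Vector_Spaces.linear sc sc (rho F)"
    using rep a b matrix_unit_in_Ghat by (simp_all add: is_rep_def E_def F_def)
  have "a \<noteq> b"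
    using gt seq_gt_irrefl by blast
  note commutators = rep_matrix_unit_commutators[OF rep a b this, folded E_def F_def P_def Q_def]
  have "rho P (rho E u) - rho Q (rho E u) - rho E (rho P u - rho Q u) = sc 2 (rho E u)" for u
  proof -
    interpret E: Vector_Spaces.linear sc sc "rho E"
      by (rule linear(1))
    have "rho P (rho E u) - rho Q (rho E u) - rho E (rho P u - rho Q u)
        = (rho P (rho E u) - rho E (rho P u)) - (rho Q (rho E u) - rho E (rho Q u))"
      by (simp add: E.diff)
    also have "\<dots> = rho E u + rho E u"
      using commutators(2,3)[of u] by simp
    finally show ?thesis
      using scale_left_distrib[of 1 1 "rho E u"] by simp
  qed
  moreover have "rho F v = 0"
    using lw matrix_unit_in_Gminus[OF b a gt] by (simp add: lw_rep_def F_def)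
  moreover have "rho P v - rho Q v = sc (h P - h Q) v"
    using lw matrix_unit_diag_in_G00_gens[OF a] matrix_unit_diag_in_G00_gens[OF b]
    by (simp add: lw_rep_def G00_def cspan_base P_def Q_def scale_left_diff_distrib)
  moreover have "v \<noteq> 0"
    using lw by (simp add: lw_rep_def)
  ultimately show ?thesis
    using linear commutators(1) unfolding E_def F_def P_def Q_def
    by (intro sl2_lowest_weight_vector.intro sl2_lowest_weight_vector_axioms.intro) simp_all
qed

lemma unitary_form_unitary_sl2_lowest_weight_vector:
  assumes lw: "lw_rep L LF sc rho v h" and unitary: "unitary_form L LF sc rho ip"
    and a: "valid_idx L LF a" and b: "valid_idx L LF b"
    and gt: "seq_gt (idx_word a) (idx_word b)"
  shows "unitary_sl2_lowest_weight_vector sc (rho (matrix_unit a b)) (rho (matrix_unit b a))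
           (\<lambda>u. rho (matrix_unit a a) u - rho (matrix_unit b b) u) v
           (h (matrix_unit a a) - h (matrix_unit b b)) ip"
proof -
  have adjoint: "ip (rho (matrix_unit a b) u) w = ip u (rho (matrix_unit b a) w)" for u w
    using unitary matrix_unit_in_Ghat[OF a b]
    unfolding unitary_form_def omega_matrix_unit[of a b, symmetric] by blast
  show ?thesis
  proof (intro unitary_sl2_lowest_weight_vector.intro unitary_sl2_lowest_weight_vector_axioms.intro)
  qed (use lw_rep_sl2_lowest_weight_vector[OF lw a b gt] unitary adjoint in
      \<open>unfold unitary_form_def, blast\<close>)+
qed

theorem lemma14:
  fixes L LF :: nat
    and sc :: "complex \<Rightarrow> 'v::ab_group_add \<Rightarrow> 'v"
    and rho :: "opmat \<Rightarrow> 'v \<Rightarrow> 'v"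
    and ip :: "'v \<Rightarrow> 'v \<Rightarrow> complex"
    and v :: 'v
    and h :: "opmat \<Rightarrow> complex"
    and I J :: "nat list"
    and l1 l2 l3 l4 :: nat
  assumes "L \<ge> 1" and "LF \<ge> 1"
    and "lw_rep L LF sc rho v h"
    and "irreducible_rep L LF sc rho"
    and "unitary_form L LF sc rho ip"
    and "valid_seq L I" and "valid_seq L J"
    and "l1 \<in> {1..LF}" and "l2 \<in> {1..LF}" and "l3 \<in> {1..LF}" and "l4 \<in> {1..LF}"
    and "seq_gt (I @ [l1, l3]) (J @ [l2, l4])"
  shows "\<exists>n::nat. hI L LF h l2 J l4 - hI L LF h l1 I l3 = of_nat n"
proof -
  define a b where "a = (l1, I, l3)" and "b = (l2, J, l4)"
  have a: "valid_idx L LF a" and b: "valid_idx L LF b"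
    using assms(6-11) by (simp_all add: a_def b_def valid_idx_def)
  have "seq_gt (idx_word a) (idx_word b)"
    using assms(12) by (simp add: a_def b_def idx_word_def)
  then interpret unitary_sl2_lowest_weight_vector sc "rho (matrix_unit a b)" "rho (matrix_unit b a)"
      "\<lambda>u. rho (matrix_unit a a) u - rho (matrix_unit b b) u" v
      "h (matrix_unit a a) - h (matrix_unit b b)" ip
    by (rule unitary_form_unitary_sl2_lowest_weight_vector[OF assms(3,5) a b])
  obtain n where "h (matrix_unit a a) - h (matrix_unit b b) = - of_nat n"
    using lowest_weight_nonpos_int by blast
  moreover have "hI L LF h l1 I l3 = h (matrix_unit a a)" and "hI L LF h l2 J l4 = h (matrix_unit b b)"
    using a b by (simp_all add: hI_def a_def b_def opF_eq_matrix_unit)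
  ultimately show ?thesis
    by (metis minus_diff_eq minus_equation_iff)
qed

end
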